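(* Consider a Boolean control network $\mathbf{x}(t+1)=L\ltimes\mathbf{u}(t)\ltimes\mathbf{x}(t)$, $\mathbf{y}(t)=H\mathbf{x}(t)$, with $L\in\mathcal{L}_{N\times NM}$, $H\in\mathcal{L}_{P\times N}$, a periodic reference output trajectory of minimal period $T\ge1$, $\mathbf{y}_r(s+kT)=\delta_P^{i_s}$ ($s\in[1,T]$, $k\in\mathbb{Z}_+$), and an initial state $\mathbf{x}_0\in\mathcal{L}_N$ from which the periodic trajectory is trackable (i.e. there exists $\{\mathbf{u}(t)\}_{t\in\mathbb{Z}_+}\subset\mathcal{L}_M$ such that the state trajectory with $\mathbf{x}(0)=\mathbf{x}_0$ satisfies $H\mathbf{x}(t)=\mathbf{y}_r(t)$ for all $t\ge1$). Let $\mathbf{v}(t)=H^\top\mathbf{y}_r(t)$ for $t\in[1,T+1]$, $L_{tot}=L_1\vee\cdots\vee L_M$, $\boldsymbol{\alpha}(1)=\mathbf{v}(1)$, $\boldsymbol{\alpha}(t)=\mathbf{v}(t)\odot(L_{tot}\boldsymbol{\alpha}(t-1))$ for $t\in[2,T+1]$; $\boldsymbol{\beta}_1(T+1)=\boldsymbol{\alpha}(T+1)$, $\boldsymbol{\beta}_1(t)=\boldsymbol{\alpha}(t)\odot(L_{tot}^\top\boldsymbol{\beta}_1(t+1))$ for $t=T,\dots,1$; for $k\ge2$, $\boldsymbol{\beta}_k(T+1)=\boldsymbol{\beta}_{k-1}(T+1)\odot\boldsymbol{\beta}_{k-1}(1)$ and $\boldsymbol{\beta}_k(t)=\boldsymbol{\beta}_{k-1}(t)\odot(L_{tot}^\top\boldsymbol{\beta}_k(t+1))$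 for $t=T,\dots,1$. Let $\mathcal{X}_t^{(k)}=\{\delta_N^j:[\boldsymbol{\beta}_k(t)]_j\neq0\}$ and let $k^*$ be the smallest $k\ge1$ with $\mathcal{X}_{T+1}^{(k)}\subseteq\mathcal{X}_1^{(k)}$ or $\mathcal{X}_1^{(k)}=\emptyset$; write $\boldsymbol{\beta}=\boldsymbol{\beta}_{k^*}$. Define $$\mathcal{T}_{xu}(0)=\{(\delta_N^j,\delta_M^i):(L\ltimes\delta_M^i\ltimes\delta_N^j)\odot\boldsymbol{\beta}(1)\neq\mathbf{0}_N\},$$ $$\mathcal{T}_{xu}(t)=\{(\delta_N^j,\delta_M^i):[\boldsymbol{\beta}(t)]_j\neq0\text{ and }(L\ltimes\delta_M^i\ltimes\delta_N^j)\odot\boldsymbol{\beta}(t+1)\neq\mathbf{0}_N\},\quad t\in[1,T-1],$$ and $\mathcal{T}_u(t,\mathbf{x})=\{\mathbf{u}\in\mathcal{L}_M:(\mathbf{x},\mathbf{u})\in\mathcal{T}_{xu}(t)\}$. Then an input sequence $\{\mathbf{u}(t)\}_{t\in\mathbb{Z}_+}$ ensuring tracking of the periodic trajectory from $\mathbf{x}_0$ is obtained by the recursive procedure: for $t=0,1,2,\dots$, choose $\mathbf{u}_t\in\mathcal{T}_u(t\bmod T,\mathbf{x}_t)$ and set $\mathbf{x}_{t+1}=L\ltimes\mathbf{u}_t\ltimes\mathbf{x}_t$, with $\mathbf{u}(t)=\mathbf{u}_t$.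
   Context: $\delta_k^i$ is the $i$-th canonical vector of $\mathbb{R}^k$; $\mathcal{L}_k$ is the set of canonical vectors of $\mathbb{R}^k$; $\mathcal{L}_{k\times q}$ the set of $k\times q$ matrices whose columns lie in $\mathcal{L}_k$. $N=2^n$, $M=2^m$, $P=2^p$. $L=[L_1|\cdots|L_M]$ with $L_i\in\mathcal{L}_{N\times N}$, and $L\ltimes\delta_M^i\ltimes\mathbf{x}=L_i\mathbf{x}$. $\vee$ is entrywise Boolean OR, $\odot$ is the entrywise (Hadamard) product, matrix–vector products are ordinary (only zero/nonzero patterns matter), $[\mathbf{w}]_j$ is the $j$-th entry, $\mathbf{0}_N$ the zero vector, and $t\bmod T$ is the remainder of the Euclidean division of $t$ by $T$. *)

theory Defs
  imports Main
begin

(* Conventions (0-based indices):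
   - a canonical vector delta_K^(j+1) is represented by its index j < K;
   - a logical matrix A in L_{K x Q} is represented by its column map
     A :: nat => nat, column c (c < Q) being delta_K^(A c + 1);
   - a Boolean (zero/nonzero pattern) vector of length N is nat => bool,
     entries with index >= N being False.
   L = [L_1|...|L_M], hence  L |x delta_M^(i+1) |x delta_N^(j+1) is column i*N+j. *)

definition nxt :: "nat \<Rightarrow> (nat \<Rightarrow> nat) \<Rightarrow> nat \<Rightarrow> nat \<Rightarrow> nat" where
  "nxt N L i j = L (i * N + j)"

fun traj :: "nat \<Rightarrow> (nat \<Rightarrow> nat) \<Rightarrow> nat \<Rightarrow> (nat \<Rightarrow> nat) \<Rightarrow> nat \<Rightarrow> nat" where
  "traj N L x0 u 0 = x0"
| "traj N L x0 u (Suc t) = nxt N L (u t) (traj N L x0 u t)"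

definition Ltot_mul :: "nat \<Rightarrow> nat \<Rightarrow> (nat \<Rightarrow> nat) \<Rightarrow> (nat \<Rightarrow> bool) \<Rightarrow> nat \<Rightarrow> bool" where
  "Ltot_mul N M L a = (\<lambda>r. \<exists>i<M. \<exists>j<N. nxt N L i j = r \<and> a j)"

definition LtotT_mul :: "nat \<Rightarrow> nat \<Rightarrow> (nat \<Rightarrow> nat) \<Rightarrow> (nat \<Rightarrow> bool) \<Rightarrow> nat \<Rightarrow> bool" where
  "LtotT_mul N M L b = (\<lambda>j. j < N \<and> (\<exists>i<M. b (nxt N L i j)))"

definition vvec :: "nat \<Rightarrow> (nat \<Rightarrow> nat) \<Rightarrow> (nat \<Rightarrow> nat) \<Rightarrow> nat \<Rightarrow> nat \<Rightarrow> bool" where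
  "vvec N H yr t = (\<lambda>j. j < N \<and> H j = yr t)"

fun alpha :: "nat \<Rightarrow> nat \<Rightarrow> (nat \<Rightarrow> nat) \<Rightarrow> (nat \<Rightarrow> nat) \<Rightarrow> (nat \<Rightarrow> nat) \<Rightarrow> nat \<Rightarrow> nat \<Rightarrow> bool" where
  "alpha N M L H yr 0 = (\<lambda>j. False)"
| "alpha N M L H yr (Suc 0) = vvec N H yr 1"
| "alpha N M L H yr (Suc (Suc t)) =
     (\<lambda>j. vvec N H yr (Suc (Suc t)) j \<and> Ltot_mul N M L (alpha N M L H yr (Suc t)) j)"

(* backward recursion: seq(T+1) = tp, seq(t) = prev(t) \<odot> (L_tot^T seq(t+1));
   bstep ... d is seq(T+1-d) *)
fun bstep :: "nat \<Rightarrow> nat \<Rightarrow> (nat \<Rightarrow> nat) \<Rightarrow> nat \<Rightarrow> (nat \<Rightarrow> nat \<Rightarrow> bool) \<Rightarrow> (nat \<Rightarrow> bool)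
              \<Rightarrow> nat \<Rightarrow> nat \<Rightarrow> bool" where
  "bstep N M L T prev tp 0 = tp"
| "bstep N M L T prev tp (Suc d) =
     (\<lambda>j. prev (T - d) j \<and> LtotT_mul N M L (bstep N M L T prev tp d) j)"

(* beta N M L H yr T k t = beta_k(t), for k >= 1 and t in [1, T+1] *)
fun beta :: "nat \<Rightarrow> nat \<Rightarrow> (nat \<Rightarrow> nat) \<Rightarrow> (nat \<Rightarrow> nat) \<Rightarrow> (nat \<Rightarrow> nat) \<Rightarrow> nat \<Rightarrow> nat
             \<Rightarrow> nat \<Rightarrow> nat \<Rightarrow> bool" where
  "beta N M L H yr T 0 = (\<lambda>t j. False)"
| "beta N M L H yr T (Suc 0) =
     (\<lambda>t. bstep N M L T (alpha N M L H yr) (alpha N M L H yr (T + 1)) (T + 1 - t))"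
| "beta N M L H yr T (Suc (Suc k)) =
     (\<lambda>t. bstep N M L T (beta N M L H yr T (Suc k))
           (\<lambda>j. beta N M L H yr T (Suc k) (T + 1) j \<and> beta N M L H yr T (Suc k) 1 j)
           (T + 1 - t))"

definition Xset :: "nat \<Rightarrow> nat \<Rightarrow> (nat \<Rightarrow> nat) \<Rightarrow> (nat \<Rightarrow> nat) \<Rightarrow> (nat \<Rightarrow> nat) \<Rightarrow> nat \<Rightarrow> nat
                    \<Rightarrow> nat \<Rightarrow> nat set" where
  "Xset N M L H yr T k t = {j. j < N \<and> beta N M L H yr T k t j}"

definition kstar :: "nat \<Rightarrow> nat \<Rightarrow> (nat \<Rightarrow> nat) \<Rightarrow> (nat \<Rightarrow> nat) \<Rightarrow> (nat \<Rightarrow> nat) \<Rightarrow> nat \<Rightarrow> nat" where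
  "kstar N M L H yr T = (LEAST k. 1 \<le> k \<and>
      (Xset N M L H yr T k (T + 1) \<subseteq> Xset N M L H yr T k 1 \<or> Xset N M L H yr T k 1 = {}))"

definition betastar :: "nat \<Rightarrow> nat \<Rightarrow> (nat \<Rightarrow> nat) \<Rightarrow> (nat \<Rightarrow> nat) \<Rightarrow> (nat \<Rightarrow> nat) \<Rightarrow> nat
                        \<Rightarrow> nat \<Rightarrow> nat \<Rightarrow> bool" where
  "betastar N M L H yr T = beta N M L H yr T (kstar N M L H yr T)"

definition Txu :: "nat \<Rightarrow> nat \<Rightarrow> (nat \<Rightarrow> nat) \<Rightarrow> (nat \<Rightarrow> nat) \<Rightarrow> (nat \<Rightarrow> nat) \<Rightarrow> nat \<Rightarrow> nat
                   \<Rightarrow> (nat \<times> nat) set" where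
  "Txu N M L H yr T t =
     (if t = 0 then {(j, i). j < N \<and> i < M \<and> betastar N M L H yr T 1 (nxt N L i j)}
      else {(j, i). j < N \<and> i < M \<and> betastar N M L H yr T t j
                  \<and> betastar N M L H yr T (t + 1) (nxt N L i j)})"

definition Tu :: "nat \<Rightarrow> nat \<Rightarrow> (nat \<Rightarrow> nat) \<Rightarrow> (nat \<Rightarrow> nat) \<Rightarrow> (nat \<Rightarrow> nat) \<Rightarrow> nat \<Rightarrow> nat
                  \<Rightarrow> nat \<Rightarrow> nat set" where
  "Tu N M L H yr T t x = {i. i < M \<and> (x, i) \<in> Txu N M L H yr T t}"

definition trackable :: "nat \<Rightarrow> nat \<Rightarrow> (nat \<Rightarrow> nat) \<Rightarrow> (nat \<Rightarrow> nat) \<Rightarrow> (nat \<Rightarrow> nat) \<Rightarrow> nat \<Rightarrow> bool" where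
  "trackable N M L H yr x0 =
     (\<exists>u. (\<forall>t. u t < M) \<and> (\<forall>t\<ge>1. H (traj N L x0 u t) = yr t))"

end

theory Submission
  imports Defs
begin

(* Every trajectory tracking y_r passes through beta_k(t) at time t, for all k >= 1 and
   t in [1, T+1]: induct on k, using that the same trajectory shifted by one period T still
   tracks y_r.  Conversely, a state in beta_k(t) has output y_r(t) and, for t <= T, a successor
   in beta_k(t+1).  Since X_(T+1)^(k+1) = X_(T+1)^(k) \<inter> X_1^(k), these finite sets decrease
   strictly until X_(T+1)^(k) \<subseteq> X_1^(k), so k* exists; and X_1^(k) for k = k* is nonempty because it
   contains the state at time 1 of the assumed tracking trajectory, so beta(T+1) \<subseteq> beta(1).
   Therefore an input in T_u(t mod T, x(t)) sends x(t) into beta(t mod T + 1), from where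
   T_u((t+1) mod T, .) is again nonempty, and periodicity of y_r yields tracking. *)

definition is_state_path :: "nat \<Rightarrow> nat \<Rightarrow> (nat \<Rightarrow> nat) \<Rightarrow> (nat \<Rightarrow> nat) \<Rightarrow> bool" where
  "is_state_path N M L x \<longleftrightarrow> (\<forall>t. x t < N \<and> (\<exists>i<M. x (Suc t) = nxt N L i (x t)))"

lemma nxt_less:
  assumes "\<forall>c < N * M. L c < N" "i < M" "j < N"
  shows "nxt N L i j < N"
proof -
  have "i * N + j < Suc i * N" using assms(3) by simp
  also have "\<dots> \<le> M * N" using assms(2) by (intro mult_right_mono) auto
  finally show ?thesis using assms(1) unfolding nxt_def by (simp add: mult.commute)
qed

lemma is_state_path_traj:
  assumes "\<forall>c < N * M. L c < N" "\<forall>t. u t < M" "x0 < N"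
  shows "is_state_path N M L (traj N L x0 u)"
proof -
  have "traj N L x0 u t < N" for t
    by (induction t) (auto intro: nxt_less[OF assms(1)] simp: assms)
  then show ?thesis unfolding is_state_path_def using assms(2) by auto
qed

lemma is_state_path_shift:
  "is_state_path N M L x \<Longrightarrow> is_state_path N M L (\<lambda>t. x (t + c))"
  unfolding is_state_path_def by simp

lemma Ltot_mul_path:
  assumes "is_state_path N M L x" "a (x t)"
  shows "Ltot_mul N M L a (x (Suc t))"
proof -
  obtain i where "i < M" "x (Suc t) = nxt N L i (x t)" "x t < N"
    using assms(1) unfolding is_state_path_def by blast
  with assms(2) show ?thesis unfolding Ltot_mul_def by auto
qed

lemma LtotT_mul_path:
  assumes "is_state_path N M L x" "b (x (Suc t))"
  shows "LtotT_mul N M L b (x t)"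
proof -
  obtain i where "i < M" "x (Suc t) = nxt N L i (x t)" "x t < N"
    using assms(1) unfolding is_state_path_def by blast
  with assms(2) show ?thesis unfolding LtotT_mul_def by auto
qed

lemma tracking_shift_period:
  fixes x :: "nat \<Rightarrow> nat"
  assumes "\<forall>t \<ge> 1. yr (t + T) = yr t" "\<forall>t \<ge> 1. H (x t) = yr t"
  shows "\<forall>t \<ge> 1. H (x (t + T)) = yr t"
proof (intro allI impI)
  fix t :: nat
  assume "1 \<le> t"
  then have "1 \<le> t + T" by simp
  with \<open>1 \<le> t\<close> show "H (x (t + T)) = yr t" using assms by simp
qed

lemma periodic_Suc_mod:
  fixes f :: "nat \<Rightarrow> 'a"
  assumes "\<forall>t \<ge> 1. f (t + T) = f t"
  shows "f (Suc (t mod T)) = f (Suc t)"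
proof -
  have "f (Suc (t mod T) + s * T) = f (Suc (t mod T))" for s
  proof (induction s)
    case (Suc s)
    have "f (Suc (t mod T) + Suc s * T) = f ((Suc (t mod T) + s * T) + T)"
      by (simp add: algebra_simps)
    also have "\<dots> = f (Suc (t mod T) + s * T)" by (rule assms[rule_format]) simp
    finally show ?case using Suc.IH by simp
  qed simp
  from this[of "t div T"] show ?thesis by simp
qed

lemma alpha_Suc:
  "1 \<le> t \<Longrightarrow> alpha N M L H yr (Suc t) =
     (\<lambda>j. vvec N H yr (Suc t) j \<and> Ltot_mul N M L (alpha N M L H yr t) j)"
  by (cases t) auto

lemma alpha_imp_vvec: "1 \<le> t \<Longrightarrow> alpha N M L H yr t j \<Longrightarrow> vvec N H yr t j"
  by (induction t rule: nat_induct_at_least) (auto simp: alpha_Suc)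

lemma alpha_tracking_path:
  assumes "is_state_path N M L x" "\<forall>t \<ge> 1. H (x t) = yr t" "1 \<le> t"
  shows "alpha N M L H yr t (x t)"
  using assms(3)
proof (induction t rule: nat_induct_at_least)
  case base
  then show ?case using assms(1,2) by (simp add: vvec_def is_state_path_def)
next
  case (Suc t)
  have "vvec N H yr (Suc t) (x (Suc t))" using assms(1,2) by (simp add: vvec_def is_state_path_def)
  with Suc show ?case by (simp add: alpha_Suc Ltot_mul_path[OF assms(1)])
qed

lemma bstep_Suc_diff:
  "t \<le> T \<Longrightarrow> bstep N M L T prev tp (Suc T - t) =
     (\<lambda>j. prev t j \<and> LtotT_mul N M L (bstep N M L T prev tp (T - t)) j)"
  by (simp add: Suc_diff_le)

lemma bstep_contains_path:
  assumes path: "is_state_path N M L x"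
    and top: "tp (x (T + 1))"
    and prev: "\<And>t. 1 \<le> t \<Longrightarrow> t \<le> T \<Longrightarrow> prev t (x t)"
  shows "d \<le> T \<Longrightarrow> bstep N M L T prev tp d (x (T + 1 - d))"
proof (induction d)
  case 0
  then show ?case using top by simp
next
  case (Suc d)
  define t where "t = T - d"
  have t: "1 \<le> t" "t \<le> T" "Suc T - Suc d = t" "Suc T - d = Suc t"
    using Suc.prems by (auto simp: t_def)
  have "bstep N M L T prev tp d (x (Suc t))" using Suc by (simp add: t(4))
  then have "LtotT_mul N M L (bstep N M L T prev tp d) (x t)" by (rule LtotT_mul_path[OF path])
  then show ?case using prev[OF t(1,2)] by (simp add: t(3) t_def)
qed

lemma beta_Suc_bstep:
  "\<exists>prev tp. beta N M L H yr T (Suc k) = (\<lambda>t. bstep N M L T prev tp (T + 1 - t))"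
  by (cases k) auto

lemma beta_successor:
  assumes "t \<le> T" "beta N M L H yr T (Suc k) t j"
  shows "j < N \<and> (\<exists>i<M. beta N M L H yr T (Suc k) (t + 1) (nxt N L i j))"
proof -
  obtain prev tp where "beta N M L H yr T (Suc k) = (\<lambda>t. bstep N M L T prev tp (T + 1 - t))"
    using beta_Suc_bstep by blast
  with assms show ?thesis by (simp add: bstep_Suc_diff LtotT_mul_def)
qed

lemma beta_1_imp_alpha:
  "t \<le> T + 1 \<Longrightarrow> beta N M L H yr T 1 t j \<Longrightarrow> alpha N M L H yr t j"
  by (cases "t = T + 1") (auto simp: bstep_Suc_diff One_nat_def)

lemma beta_Suc_Suc_imp_beta_Suc:
  "t \<le> T + 1 \<Longrightarrow> beta N M L H yr T (Suc (Suc k)) t j \<Longrightarrow> beta N M L H yr T (Suc k) t j"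
  by (cases "t = T + 1") (auto simp del: beta.simps(2) simp: bstep_Suc_diff)

lemma beta_imp_vvec:
  assumes "1 \<le> k" "1 \<le> t" "t \<le> T + 1" "beta N M L H yr T k t j"
  shows "vvec N H yr t j"
proof -
  have "alpha N M L H yr t j" using assms(1,4)
  proof (induction k rule: nat_induct_at_least)
    case base
    then show ?case by (rule beta_1_imp_alpha[OF assms(3)])
  next
    case (Suc k)
    then obtain k' where "k = Suc k'" by (cases k) auto
    then show ?case using Suc beta_Suc_Suc_imp_beta_Suc[OF assms(3)] by blast
  qed
  with assms(2) show ?thesis by (rule alpha_imp_vvec)
qed

lemma beta_tracking_path:
  assumes "is_state_path N M L x"
    and "\<forall>t \<ge> 1. yr (t + T) = yr t" "\<forall>t \<ge> 1. H (x t) = yr t"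
    and "1 \<le> t" "t \<le> T + 1"
  shows "beta N M L H yr T (Suc k) t (x t)"
  using assms(1,3-5)
proof (induction k arbitrary: x t)
  case 0
  have "bstep N M L T (alpha N M L H yr) (alpha N M L H yr (T + 1)) (T + 1 - t) (x (T + 1 - (T + 1 - t)))"
    using 0 by (intro bstep_contains_path alpha_tracking_path) auto
  then show ?case using 0 by simp
next
  case (Suc k)
  have shifted: "beta N M L H yr T (Suc k) 1 (x (1 + T))"
    using Suc.IH[of "\<lambda>t. x (t + T)" 1] is_state_path_shift tracking_shift_period assms(2) Suc.prems
    by simp
  have "bstep N M L T (beta N M L H yr T (Suc k))
          (\<lambda>j. beta N M L H yr T (Suc k) (T + 1) j \<and> beta N M L H yr T (Suc k) 1 j)
          (T + 1 - t) (x (T + 1 - (T + 1 - t)))"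
    using Suc shifted by (intro bstep_contains_path) auto
  then show ?case using Suc.prems by simp
qed

lemma kstar_exists:
  "\<exists>k. 1 \<le> k \<and> (Xset N M L H yr T k (T + 1) \<subseteq> Xset N M L H yr T k 1
            \<or> Xset N M L H yr T k 1 = {})"
proof (rule ccontr)
  assume none: "\<not> ?thesis"
  define X where "X i = Xset N M L H yr T (Suc i) (T + 1)" for i
  have "(X (Suc i), X i) \<in> finite_psubset" for i
  proof -
    have "\<not> X i \<subseteq> Xset N M L H yr T (Suc i) 1" using none by (auto simp: X_def)
    then have "X (Suc i) \<subset> X i" by (auto simp: X_def Xset_def)
    moreover have "finite (X i)" by (simp add: X_def Xset_def)
    ultimately show ?thesis by (simp add: finite_psubset_def)
  qed
  then show False by (metis wf_finite_psubset wf_no_infinite_down_chainE)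
qed

lemma kstar_spec:
  "1 \<le> kstar N M L H yr T \<and>
   (Xset N M L H yr T (kstar N M L H yr T) (T + 1) \<subseteq> Xset N M L H yr T (kstar N M L H yr T) 1
    \<or> Xset N M L H yr T (kstar N M L H yr T) 1 = {})"
  unfolding kstar_def by (rule LeastI_ex[OF kstar_exists])

lemma betastar_eq_beta_Suc: "\<exists>k. betastar N M L H yr T = beta N M L H yr T (Suc k)"
  using kstar_spec unfolding betastar_def by (metis One_nat_def Suc_le_D)

lemma betastar_output:
  "1 \<le> t \<Longrightarrow> t \<le> T + 1 \<Longrightarrow> betastar N M L H yr T t j \<Longrightarrow> j < N \<and> H j = yr t"
  using beta_imp_vvec kstar_spec unfolding betastar_def vvec_def by blast

lemma betastar_successor:
  "t \<le> T \<Longrightarrow> betastar N M L H yr T t j \<Longrightarrow>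
     j < N \<and> (\<exists>i<M. betastar N M L H yr T (t + 1) (nxt N L i j))"
  using beta_successor betastar_eq_beta_Suc by metis

lemma betastar_tracking_path:
  "is_state_path N M L x \<Longrightarrow> \<forall>t \<ge> 1. yr (t + T) = yr t \<Longrightarrow> \<forall>t \<ge> 1. H (x t) = yr t \<Longrightarrow>
   1 \<le> t \<Longrightarrow> t \<le> T + 1 \<Longrightarrow> betastar N M L H yr T t (x t)"
  using beta_tracking_path betastar_eq_beta_Suc by metis

lemma betastar_closed:
  assumes "betastar N M L H yr T 1 j0" "betastar N M L H yr T (T + 1) j"
  shows "betastar N M L H yr T 1 j"
proof -
  have "j0 \<in> Xset N M L H yr T (kstar N M L H yr T) 1"
    using betastar_output[OF _ _ assms(1)] assms(1) by (simp add: Xset_def betastar_def)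
  then have "Xset N M L H yr T (kstar N M L H yr T) (T + 1) \<subseteq> Xset N M L H yr T (kstar N M L H yr T) 1"
    using kstar_spec by blast
  moreover have "j \<in> Xset N M L H yr T (kstar N M L H yr T) (T + 1)"
    using betastar_output[OF _ _ assms(2)] assms(2) by (simp add: Xset_def betastar_def)
  ultimately show ?thesis by (auto simp: Xset_def betastar_def)
qed

lemma Tu_imp_betastar: "i \<in> Tu N M L H yr T p x \<Longrightarrow> betastar N M L H yr T (Suc p) (nxt N L i x)"
  by (auto simp: Tu_def Txu_def split: if_splits)

lemma Tu_nonempty:
  assumes "p < T"
    and closed: "\<And>j. betastar N M L H yr T (T + 1) j \<Longrightarrow> betastar N M L H yr T 1 j"
    and "betastar N M L H yr T (Suc p) y"
  shows "Tu N M L H yr T (Suc p mod T) y \<noteq> {}"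
proof -
  obtain i where i: "i < M" "betastar N M L H yr T (Suc p + 1) (nxt N L i y)" and "y < N"
    using betastar_successor assms(1,3) by (metis Suc_leI)
  have "i \<in> Tu N M L H yr T (Suc p mod T) y"
    using i assms \<open>y < N\<close> by (cases "Suc p = T") (auto simp: Tu_def Txu_def)
  then show ?thesis by blast
qed

theorem corollary2:
  fixes n m p T x0 :: nat and L H yr :: "nat \<Rightarrow> nat"
  defines "N \<equiv> 2 ^ n" and "M \<equiv> 2 ^ m" and "P \<equiv> 2 ^ p"
  assumes L_log: "\<forall>c < N * M. L c < N"
      and H_log: "\<forall>j < N. H j < P"
      and T_pos: "1 \<le> T"
      and yr_range: "\<forall>t \<ge> 1. yr t < P"
      and yr_per: "\<forall>t \<ge> 1. yr (t + T) = yr t"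
      and yr_min: "\<forall>T'. 1 \<le> T' \<and> T' < T \<longrightarrow> \<not> (\<forall>t \<ge> 1. yr (t + T') = yr t)"
      and x0_st: "x0 < N"
      and track: "trackable N M L H yr x0"
  shows "(\<forall>u t. (\<forall>s < t. u s \<in> Tu N M L H yr T (s mod T) (traj N L x0 u s))
               \<longrightarrow> Tu N M L H yr T (t mod T) (traj N L x0 u t) \<noteq> {})
       \<and> (\<forall>u. (\<forall>t. u t \<in> Tu N M L H yr T (t mod T) (traj N L x0 u t))
               \<longrightarrow> (\<forall>t \<ge> 1. H (traj N L x0 u t) = yr t))"
proof -
  obtain u0 where u0: "\<forall>t. u0 t < M" "\<forall>t \<ge> 1. H (traj N L x0 u0 t) = yr t"
    using track unfolding trackable_def by blast
  have "betastar N M L H yr T 1 (traj N L x0 u0 1)"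
    by (rule betastar_tracking_path[OF is_state_path_traj[OF L_log u0(1) x0_st] yr_per u0(2)]) simp_all
  then have first: "betastar N M L H yr T 1 (nxt N L (u0 0) x0)" by simp
  have start: "Tu N M L H yr T 0 x0 \<noteq> {}"
    using first x0_st u0(1) by (auto simp: Tu_def Txu_def)
  have phase: "t mod T < T" for t using T_pos by simp
  have step: "Tu N M L H yr T (Suc t mod T) (nxt N L i x) \<noteq> {}"
    if "i \<in> Tu N M L H yr T (t mod T) x" for i x t
    using Tu_nonempty[OF phase betastar_closed[OF first] Tu_imp_betastar[OF that]]
    by (simp add: mod_Suc_eq)
  have tracks: "H (nxt N L i x) = yr (Suc t)"
    if "i \<in> Tu N M L H yr T (t mod T) x" for i x t
    using betastar_output[OF _ _ Tu_imp_betastar[OF that]] phase[of t] periodic_Suc_mod[OF yr_per]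
    by simp
  show ?thesis
  proof (intro conjI allI impI)
    fix u :: "nat \<Rightarrow> nat" and t :: nat
    assume "\<forall>s < t. u s \<in> Tu N M L H yr T (s mod T) (traj N L x0 u s)"
    then show "Tu N M L H yr T (t mod T) (traj N L x0 u t) \<noteq> {}"
      using start step by (cases t) auto
  next
    fix u :: "nat \<Rightarrow> nat" and t :: nat
    assume "\<forall>t. u t \<in> Tu N M L H yr T (t mod T) (traj N L x0 u t)" "1 \<le> t"
    then show "H (traj N L x0 u t) = yr t"
      using tracks by (cases t) auto
  qed
qed

end
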